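(* For every positive integer $n$, $|S_n(T\cup\{\tau\})|=n$ in the following cases: (1) $T=\{123,132,231\}$ and $\tau\in S_4$ contains at least one permutation in $T$; (2) $T=\{123,132,213\}$ and $\tau=3412$.
   Context: Permutations are written in one-line notation. A permutation $\sigma\in S_n$ contains $\pi\in S_m$ if there are indices $i_1<\dots<i_m$ such that for all $j<l$, $\sigma_{i_j}<\sigma_{i_l}$ iff $\pi_j<\pi_l$; otherwise $\sigma$ avoids $\pi$. For a set $A$ of patterns, $S_n(A)$ is the set of permutations in $S_n$ avoiding every pattern in $A$. *)

theory Defs
  imports Main
begin

definition is_perm :: "nat \<Rightarrow> nat list \<Rightarrow> bool" where
  "is_perm n \<sigma> \<longleftrightarrow> length \<sigma> = n \<and> distinct \<sigma> \<and> set \<sigma> = {1..n}"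

definition contains :: "nat list \<Rightarrow> nat list \<Rightarrow> bool" where
  "contains \<sigma> \<pi> \<longleftrightarrow> (\<exists>is. length is = length \<pi> \<and> sorted_wrt (<) is \<and>
      (\<forall>i\<in>set is. i < length \<sigma>) \<and>
      (\<forall>j l. j < l \<longrightarrow> l < length \<pi> \<longrightarrow>
          (\<sigma> ! (is ! j) < \<sigma> ! (is ! l) \<longleftrightarrow> \<pi> ! j < \<pi> ! l)))"

definition avoids :: "nat list \<Rightarrow> nat list \<Rightarrow> bool" where
  "avoids \<sigma> \<pi> \<longleftrightarrow> \<not> contains \<sigma> \<pi>"

definition Av :: "nat \<Rightarrow> nat list set \<Rightarrow> nat list set" where
  "Av n A = {\<sigma>. is_perm n \<sigma> \<and> (\<forall>\<pi>\<in>A. avoids \<sigma> \<pi>)}"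

end

theory Submission
  imports Defs
begin

text \<open>
  Every pattern \<open>\<pi>\<close> in either set has an entry larger than its first one, so an occurrence
  of \<open>\<pi>\<close> in \<open>(n+1) \<sigma>\<close> cannot use the leading maximum: the avoiders in \<open>S\<^sub>n\<^sub>+\<^sub>1\<close> that start
  with \<open>n+1\<close> are exactly \<open>(n+1) \<sigma>\<close> for the avoiders \<open>\<sigma>\<close> in \<open>S\<^sub>n\<close>. For both sets of patterns
  exactly one other avoider exists: for \<open>{123, 132, 231}\<close> the maximum must come last with a
  decreasing prefix, \<open>n (n-1) \<dots> 1 (n+1)\<close>; for \<open>{123, 132, 213, 3412}\<close> it must come second,
  giving \<open>n (n+1) (n-1) \<dots> 1\<close>. Hence the counts grow by one at each step. In case (1) the
  extra pattern \<open>\<tau>\<close> is redundant because containment is transitive.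
\<close>

definition non_inversion :: "nat list \<Rightarrow> nat \<Rightarrow> nat \<Rightarrow> bool" where
  "non_inversion \<sigma> i j \<longleftrightarrow> i < j \<and> j < length \<sigma> \<and> \<sigma> ! i < \<sigma> ! j"

lemma non_inversion_Cons_iff:
  "non_inversion (x # ys) i j \<longleftrightarrow>
     (i = 0 \<and> (\<exists>j'. j = Suc j' \<and> j' < length ys \<and> x < ys ! j')) \<or>
     (\<exists>i' j'. i = Suc i' \<and> j = Suc j' \<and> non_inversion ys i' j')"
  by (cases i; cases j) (auto simp: non_inversion_def)

lemma sorted_wrt_greater_iff_no_non_inversion:
  assumes "distinct xs"
  shows "sorted_wrt (>) xs \<longleftrightarrow> (\<forall>i j. \<not> non_inversion xs i j)"
  using assms unfolding sorted_wrt_iff_nth_less non_inversion_def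
  by (metis less_trans nat_neq_iff nth_eq_iff_index_eq)

lemma non_inversion_decreasing_snoc:
  assumes "sorted_wrt (>) xs" "non_inversion (xs @ [m]) i j"
  shows "j = length xs"
  using assms sorted_wrt_nth_less[OF assms(1)]
  by (fastforce simp: non_inversion_def nth_append less_Suc_eq split: if_splits)

lemma non_inversion_peak_then_decreasing:
  assumes "sorted_wrt (>) xs" "\<forall>x\<in>set xs. x < a" "a < b" "non_inversion (a # b # xs) i j"
  shows "i = 0 \<and> j = 1"
proof -
  have no_inv: "\<not> non_inversion xs i' j'" for i' j'
    using sorted_wrt_nth_less[OF assms(1)] by (fastforce simp: non_inversion_def)
  have below: "xs ! k < a" if "k < length xs" for k
    using assms(2) that by simp
  from assms(4) consider
      (first) j' where "i = 0" "j = Suc j'" "j' < length (b # xs)" "a < (b # xs) ! j'"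
    | (second) k where "i = 1" "j = Suc (Suc k)" "k < length xs" "b < xs ! k"
    | (tail) i' j' where "non_inversion xs i' j'"
    unfolding non_inversion_Cons_iff by auto
  then show ?thesis
  proof cases
    case first
    then show ?thesis using below by (cases j') (auto dest: less_asym)
  next
    case second
    then show ?thesis using below assms(3) by (meson less_asym order.strict_trans)
  qed (use no_inv in blast)
qed

lemma contains_Cons:
  assumes "contains \<sigma> \<pi>" shows "contains (x # \<sigma>) \<pi>"
proof -
  from assms obtain "is" where "length is = length \<pi>" "sorted_wrt (<) is" "\<forall>i\<in>set is. i < length \<sigma>"
    "\<forall>j l. j < l \<longrightarrow> l < length \<pi> \<longrightarrow> (\<sigma> ! (is ! j) < \<sigma> ! (is ! l)) = (\<pi> ! j < \<pi> ! l)"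
    unfolding contains_def by blast
  then show ?thesis
    unfolding contains_def by (intro exI[of _ "map Suc is"]) (auto simp: sorted_wrt_map)
qed

lemma contains_Cons_greater_imp_contains:
  assumes "\<forall>y\<in>set \<sigma>. y < x" "non_inversion \<pi> 0 l" "contains (x # \<sigma>) \<pi>"
  shows "contains \<sigma> \<pi>"
proof -
  obtain "is" where h: "length is = length \<pi>" "sorted_wrt (<) is" "\<forall>i\<in>set is. i < length (x # \<sigma>)"
    "\<forall>j l. j < l \<longrightarrow> l < length \<pi> \<longrightarrow> ((x # \<sigma>) ! (is ! j) < (x # \<sigma>) ! (is ! l)) = (\<pi> ! j < \<pi> ! l)"
    using assms(3) unfolding contains_def by blast
  have "is ! 0 < is ! l" "(x # \<sigma>) ! (is ! 0) < (x # \<sigma>) ! (is ! l)"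
    using h assms(2) sorted_wrt_nth_less by (fastforce simp: non_inversion_def)+
  moreover have "is ! l < Suc (length \<sigma>)" using h(1,3) assms(2) by (auto simp: non_inversion_def)
  moreover have "(x # \<sigma>) ! (is ! l) \<in> set \<sigma>"
    using calculation(1,3) by (cases "is ! l") auto
  ultimately have "is ! 0 \<noteq> 0" using assms(1) by (metis less_asym nth_Cons_0)
  then have "0 \<notin> set is"
    using h(2) by (auto simp: in_set_conv_nth sorted_wrt_iff_nth_less) (metis gr0I less_nat_zero_code)
  then obtain js where "is = map Suc js"
    by (metis ex_map_conv not0_implies_Suc)
  with h have "length js = length \<pi>" "sorted_wrt (<) js" "\<forall>i\<in>set js. i < length \<sigma>"
    "\<forall>j l. j < l \<longrightarrow> l < length \<pi> \<longrightarrow> (\<sigma> ! (js ! j) < \<sigma> ! (js ! l)) = (\<pi> ! j < \<pi> ! l)"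
    by (auto simp: sorted_wrt_map)
  then show ?thesis unfolding contains_def by blast
qed

lemma contains_trans:
  assumes "contains \<sigma> \<tau>" "contains \<tau> \<pi>" shows "contains \<sigma> \<pi>"
proof -
  obtain js where j: "length js = length \<tau>" "sorted_wrt (<) js" "\<forall>i\<in>set js. i < length \<sigma>"
    "\<forall>j l. j < l \<longrightarrow> l < length \<tau> \<longrightarrow> (\<sigma> ! (js ! j) < \<sigma> ! (js ! l)) = (\<tau> ! j < \<tau> ! l)"
    using assms(1) unfolding contains_def by blast
  obtain ks where k: "length ks = length \<pi>" "sorted_wrt (<) ks" "\<forall>i\<in>set ks. i < length \<tau>"
    "\<forall>j l. j < l \<longrightarrow> l < length \<pi> \<longrightarrow> (\<tau> ! (ks ! j) < \<tau> ! (ks ! l)) = (\<pi> ! j < \<pi> ! l)"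
    using assms(2) unfolding contains_def by blast
  have ks_less: "ks ! a < ks ! b" "ks ! b < length js" if "a < b" "b < length \<pi>" for a b
    using that k j(1) sorted_wrt_nth_less by fastforce+
  have "sorted_wrt (<) (map ((!) js) ks)"
    unfolding sorted_wrt_iff_nth_less using ks_less k(1) sorted_wrt_nth_less[OF j(2)] by auto
  moreover have "\<forall>i\<in>set (map ((!) js) ks). i < length \<sigma>" using k(3) j(1,3) by auto
  moreover have "(\<sigma> ! (map ((!) js) ks ! a) < \<sigma> ! (map ((!) js) ks ! b)) = (\<pi> ! a < \<pi> ! b)"
    if "a < b" "b < length \<pi>" for a b
    using that ks_less[OF that] j(1,4) k(1,4) by auto
  ultimately show ?thesis unfolding contains_def using k(1) by (intro exI[of _ "map ((!) js) ks"]) auto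
qed

lemma length_le_if_contains: "contains \<sigma> \<pi> \<Longrightarrow> length \<pi> \<le> length \<sigma>"
proof -
  assume "contains \<sigma> \<pi>"
  then obtain "is" where h: "length is = length \<pi>" "sorted_wrt (<) is" "\<forall>i\<in>set is. i < length \<sigma>"
    unfolding contains_def by blast
  have "length is = card (set is)"
    using h(2) by (simp add: distinct_card strict_sorted_iff)
  also have "\<dots> \<le> card {..<length \<sigma>}" using h(3) by (intro card_mono) auto
  finally show ?thesis using h(1) by simp
qed

lemma contains_by_3_positions:
  assumes "i < j" "j < k" "k < length \<sigma>" "length p = 3"
    "\<sigma> ! i < \<sigma> ! j \<longleftrightarrow> p ! 0 < p ! 1" "\<sigma> ! i < \<sigma> ! k \<longleftrightarrow> p ! 0 < p ! 2"
    "\<sigma> ! j < \<sigma> ! k \<longleftrightarrow> p ! 1 < p ! 2"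
  shows "contains \<sigma> p"
  unfolding contains_def
proof (intro exI[of _ "[i, j, k]"] conjI allI impI)
  fix a b assume "a < b" "b < length p"
  then have "a = 0 \<and> b = 1 \<or> a = 0 \<and> b = 2 \<or> a = 1 \<and> b = 2"
    using assms(4) by (auto simp: less_Suc_eq numeral_eq_Suc)
  then show "\<sigma> ! ([i, j, k] ! a) < \<sigma> ! ([i, j, k] ! b) \<longleftrightarrow> p ! a < p ! b"
    by (elim disjE) (use assms in simp_all)
qed (use assms in auto)

lemma contains_by_4_positions:
  assumes "i < j" "j < k" "k < m" "m < length \<sigma>" "length p = 4"
    "\<sigma> ! i < \<sigma> ! j \<longleftrightarrow> p ! 0 < p ! 1" "\<sigma> ! i < \<sigma> ! k \<longleftrightarrow> p ! 0 < p ! 2"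
    "\<sigma> ! j < \<sigma> ! k \<longleftrightarrow> p ! 1 < p ! 2" "\<sigma> ! i < \<sigma> ! m \<longleftrightarrow> p ! 0 < p ! 3"
    "\<sigma> ! j < \<sigma> ! m \<longleftrightarrow> p ! 1 < p ! 3" "\<sigma> ! k < \<sigma> ! m \<longleftrightarrow> p ! 2 < p ! 3"
  shows "contains \<sigma> p"
  unfolding contains_def
proof (intro exI[of _ "[i, j, k, m]"] conjI allI impI)
  fix a b assume "a < b" "b < length p"
  then have "a = 0 \<and> b = 1 \<or> a = 0 \<and> b = 2 \<or> a = 1 \<and> b = 2 \<or>
      a = 0 \<and> b = 3 \<or> a = 1 \<and> b = 3 \<or> a = 2 \<and> b = 3"
    using assms(5) by (auto simp: less_Suc_eq numeral_eq_Suc)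
  then show "\<sigma> ! ([i, j, k, m] ! a) < \<sigma> ! ([i, j, k, m] ! b) \<longleftrightarrow> p ! a < p ! b"
    by (elim disjE) (use assms in simp_all)
qed (use assms in auto)

lemma contains_non_inversionE:
  assumes "contains \<sigma> \<pi>"
  obtains "is" where "length is = length \<pi>" "sorted_wrt (<) is" "\<forall>i\<in>set is. i < length \<sigma>"
    "\<And>j l. non_inversion \<pi> j l \<Longrightarrow> non_inversion \<sigma> (is ! j) (is ! l)"
proof -
  from assms obtain "is" where h: "length is = length \<pi>" "sorted_wrt (<) is" "\<forall>i\<in>set is. i < length \<sigma>"
    "\<forall>j l. j < l \<longrightarrow> l < length \<pi> \<longrightarrow> (\<sigma> ! (is ! j) < \<sigma> ! (is ! l)) = (\<pi> ! j < \<pi> ! l)"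
    unfolding contains_def by blast
  moreover have "non_inversion \<sigma> (is ! j) (is ! l)" if "non_inversion \<pi> j l" for j l
    using that h sorted_wrt_nth_less by (fastforce simp: non_inversion_def)
  ultimately show ?thesis using that by blast
qed

lemma not_contains_if_non_inversions_end_last:
  assumes "\<And>i j. non_inversion \<sigma> i j \<Longrightarrow> Suc j = length \<sigma>"
    and "non_inversion \<pi> j l" "Suc l < length \<pi>"
  shows "\<not> contains \<sigma> \<pi>"
proof
  assume "contains \<sigma> \<pi>"
  then obtain "is" where "length is = length \<pi>" "sorted_wrt (<) is" "\<forall>i\<in>set is. i < length \<sigma>"
    and non_inv: "\<And>j l. non_inversion \<pi> j l \<Longrightarrow> non_inversion \<sigma> (is ! j) (is ! l)"
    by (rule contains_non_inversionE) (rule that)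
  then have "is ! l < is ! Suc l" "is ! Suc l < length \<sigma>"
    using assms(3) sorted_wrt_nth_less by fastforce+
  moreover have "Suc (is ! l) = length \<sigma>" using assms(1)[OF non_inv[OF assms(2)]] .
  ultimately show False by simp
qed

lemma not_contains_if_single_non_inversion:
  assumes "\<And>i j. non_inversion \<sigma> i j \<Longrightarrow> i = 0 \<and> j = 1"
    and "non_inversion \<pi> a b" "non_inversion \<pi> c d" "(a, b) \<noteq> (c, d)"
  shows "\<not> contains \<sigma> \<pi>"
proof
  assume "contains \<sigma> \<pi>"
  then obtain "is" where "length is = length \<pi>" "sorted_wrt (<) is"
    and non_inv: "\<And>j l. non_inversion \<pi> j l \<Longrightarrow> non_inversion \<sigma> (is ! j) (is ! l)"
    by (rule contains_non_inversionE) (rule that)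
  moreover have "is ! a = is ! c" "is ! b = is ! d"
    using assms(1)[OF non_inv[OF assms(2)]] assms(1)[OF non_inv[OF assms(3)]] by auto
  moreover have "distinct is" using \<open>sorted_wrt (<) is\<close> by (simp add: strict_sorted_iff)
  ultimately show False using assms(2-4) by (auto simp: non_inversion_def nth_eq_iff_index_eq)
qed

lemma is_perm_Cons_max_iff: "is_perm (Suc n) (Suc n # \<sigma>) \<longleftrightarrow> is_perm n \<sigma>"
proof -
  have top: "{1..Suc n} = insert (Suc n) {1..n}" "Suc n \<notin> {1..n}" by auto
  show ?thesis unfolding is_perm_def top(1)
    using top(2) by (auto simp: insert_ident simp del: atLeastAtMost_iff)
qed

lemma is_perm_mem_less_Suc: "is_perm n \<sigma> \<Longrightarrow> x \<in> set \<sigma> \<Longrightarrow> x < Suc n"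
  by (auto simp: is_perm_def)

lemma is_perm_Suc_split_max:
  assumes "is_perm (Suc n) \<sigma>"
  obtains us vs where "\<sigma> = us @ Suc n # vs" "is_perm n (us @ vs)"
proof -
  have "Suc n \<in> set \<sigma>" using assms by (auto simp: is_perm_def)
  then obtain us vs where \<sigma>: "\<sigma> = us @ Suc n # vs" by (meson split_list)
  then have "is_perm (Suc n) (Suc n # us @ vs)" using assms by (auto simp: is_perm_def)
  then show ?thesis using that \<sigma> is_perm_Cons_max_iff by blast
qed

lemma sorted_greater_eq_rev_upt:
  assumes "sorted_wrt (>) xs" "set xs = {1..<m}" shows "xs = rev [1..<m]"
proof -
  have "sorted_wrt (<) (rev xs)" using assms(1) by (simp add: sorted_wrt_rev)
  then have "sorted (rev xs)" "distinct (rev xs)" by (simp_all add: strict_sorted_iff)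
  moreover have "set (rev xs) = set [1..<m]" using assms(2) by simp
  ultimately have "rev xs = [1..<m]"
    by (intro sorted_distinct_set_unique) simp_all
  then show ?thesis by (metis rev_rev_ident)
qed

lemma sorted_greater_rev_upt: "sorted_wrt (>) (rev [1..<m])"
  by (simp add: sorted_wrt_rev del: upt_Suc)

lemma finite_Av: "finite (Av n A)"
proof (rule finite_subset)
  show "Av n A \<subseteq> {xs. set xs \<subseteq> {1..n} \<and> length xs = n}"
    by (auto simp: Av_def is_perm_def)
qed (simp add: finite_lists_length_eq)

lemma Av_Un_redundant_pattern:
  assumes "\<exists>\<pi>\<in>A. contains \<tau> \<pi>" shows "Av n (A \<union> {\<tau>}) = Av n A"
  using assms contains_trans unfolding Av_def avoids_def by blast

lemma Cons_max_mem_Av_iff: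
  assumes "\<forall>\<pi>\<in>A. \<exists>l. non_inversion \<pi> 0 l"
  shows "Suc n # \<sigma> \<in> Av (Suc n) A \<longleftrightarrow> \<sigma> \<in> Av n A"
proof
  assume "Suc n # \<sigma> \<in> Av (Suc n) A"
  then show "\<sigma> \<in> Av n A"
    using contains_Cons by (auto simp: Av_def avoids_def is_perm_Cons_max_iff)
next
  assume \<sigma>: "\<sigma> \<in> Av n A"
  then have "\<forall>y\<in>set \<sigma>. y < Suc n" by (auto simp: Av_def is_perm_mem_less_Suc)
  then show "Suc n # \<sigma> \<in> Av (Suc n) A"
    using \<sigma> assms contains_Cons_greater_imp_contains
    by (fastforce simp: Av_def avoids_def is_perm_Cons_max_iff)
qed

lemma Av_Suc_eq_Cons_max_Un:
  assumes "\<forall>\<pi>\<in>A. \<exists>l. non_inversion \<pi> 0 l"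
  shows "Av (Suc n) A = Cons (Suc n) ` Av n A \<union> {\<sigma> \<in> Av (Suc n) A. hd \<sigma> \<noteq> Suc n}"
proof (intro equalityI subsetI)
  fix \<sigma> assume \<sigma>: "\<sigma> \<in> Av (Suc n) A"
  show "\<sigma> \<in> Cons (Suc n) ` Av n A \<union> {\<sigma> \<in> Av (Suc n) A. hd \<sigma> \<noteq> Suc n}"
  proof (cases "hd \<sigma> = Suc n")
    case True
    with \<sigma> have "\<sigma> = Suc n # tl \<sigma>" by (cases \<sigma>) (auto simp: Av_def is_perm_def)
    moreover from this \<sigma> have "tl \<sigma> \<in> Av n A" using Cons_max_mem_Av_iff[OF assms] by metis
    ultimately show ?thesis by blast
  qed (use \<sigma> in blast)
qed (use Cons_max_mem_Av_iff[OF assms] in auto)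

lemma Av_1:
  assumes "\<forall>\<pi>\<in>A. 1 < length \<pi>" shows "Av 1 A = {[1]}"
proof -
  have "is_perm 1 \<sigma> \<longleftrightarrow> \<sigma> = [1]" for \<sigma>
    unfolding is_perm_def by (cases \<sigma>) auto
  moreover have "\<not> contains [1] \<pi>" if "\<pi> \<in> A" for \<pi>
    using that assms length_le_if_contains by fastforce
  ultimately show ?thesis unfolding Av_def avoids_def by auto
qed

lemma card_Av_eq_if_unique_max_not_first:
  assumes "\<forall>\<pi>\<in>A. \<exists>l. non_inversion \<pi> 0 l"
    and "\<And>n. 1 \<le> n \<Longrightarrow> \<exists>\<delta>. {\<sigma> \<in> Av (Suc n) A. hd \<sigma> \<noteq> Suc n} = {\<delta>}"
    and "1 \<le> n"
  shows "card (Av n A) = n"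
  using assms(3)
proof (induction n rule: nat_induct_at_least)
  case base
  have "\<forall>\<pi>\<in>A. 1 < length \<pi>" using assms(1) unfolding non_inversion_def by fastforce
  then have "Av 1 A = {[1]}" by (rule Av_1)
  then show ?case by simp
next
  case (Suc n)
  obtain \<delta> where \<delta>: "{\<sigma> \<in> Av (Suc n) A. hd \<sigma> \<noteq> Suc n} = {\<delta>}" using assms(2)[OF Suc.hyps] by blast
  then have "hd \<delta> \<noteq> Suc n" by blast
  then have "\<delta> \<notin> Cons (Suc n) ` Av n A" by auto
  then have "card (Cons (Suc n) ` Av n A \<union> {\<delta>}) = Suc (card (Av n A))"
    by (simp add: card_image finite_Av)
  moreover have "Av (Suc n) A = Cons (Suc n) ` Av n A \<union> {\<delta>}"
    using Av_Suc_eq_Cons_max_Un[OF assms(1), of n] unfolding \<delta> .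
  ultimately show ?case using Suc.IH by simp
qed

lemma decreasing_snoc_max_mem_Av_123_132_231:
  "rev [1..<Suc n] @ [Suc n] \<in> Av (Suc n) {[1,2,3], [1,3,2], [2,3,1]}"
proof -
  have "is_perm (Suc n) (rev [1..<Suc n] @ [Suc n])"
    unfolding is_perm_def by (auto simp del: upt_Suc)
  moreover have "\<not> contains (rev [1..<Suc n] @ [Suc n]) \<pi>"
    if "\<pi> \<in> {[1,2,3], [1,3,2], [2,3,1]}" for \<pi>
  proof (rule not_contains_if_non_inversions_end_last)
    show "Suc j = length (rev [1..<Suc n] @ [Suc n])"
      if "non_inversion (rev [1..<Suc n] @ [Suc n]) i j" for i j
      using non_inversion_decreasing_snoc[OF sorted_greater_rev_upt that] by simp
    show "non_inversion \<pi> 0 1" "Suc 1 < length \<pi>"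
      using \<open>\<pi> \<in> _\<close> by (auto simp: non_inversion_def)
  qed
  ultimately show ?thesis by (simp add: Av_def avoids_def)
qed

lemma max_last_if_avoids_132_231:
  assumes "is_perm (Suc n) \<sigma>" "\<not> contains \<sigma> [1,3,2]" "\<not> contains \<sigma> [2,3,1]" "hd \<sigma> \<noteq> Suc n"
  obtains us where "\<sigma> = us @ [Suc n]" "is_perm n us"
proof -
  obtain us vs where \<sigma>: "\<sigma> = us @ Suc n # vs" and p: "is_perm n (us @ vs)"
    by (rule is_perm_Suc_split_max[OF assms(1)])
  have "us \<noteq> []" using assms(4) \<sigma> by auto
  have "vs = []"
  proof (rule ccontr)
    assume "vs \<noteq> []"
    have "distinct (us @ vs)" using p by (simp add: is_perm_def)
    then have "hd us \<noteq> hd vs" using \<open>us \<noteq> []\<close> \<open>vs \<noteq> []\<close>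
      by (metis disjoint_iff distinct_append hd_in_set)
    moreover have "hd us < Suc n" "hd vs < Suc n"
      using is_perm_mem_less_Suc[OF p] \<open>us \<noteq> []\<close> \<open>vs \<noteq> []\<close> by auto
    moreover have "\<sigma> ! 0 = hd us" "\<sigma> ! length us = Suc n" "\<sigma> ! Suc (length us) = hd vs"
      using \<sigma> \<open>us \<noteq> []\<close> \<open>vs \<noteq> []\<close> by (auto simp: nth_append hd_conv_nth)
    moreover have "0 < length us" "Suc (length us) < length \<sigma>"
      using \<sigma> \<open>us \<noteq> []\<close> \<open>vs \<noteq> []\<close> by auto
    ultimately have "contains \<sigma> [1,3,2] \<or> contains \<sigma> [2,3,1]"
      by (cases "hd us < hd vs") (auto intro!: contains_by_3_positions[of 0 "length us" "Suc (length us)"])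
    with assms(2,3) show False by blast
  qed
  then show ?thesis using that \<sigma> p by simp
qed

lemma Av_123_132_231_max_not_first_imp:
  assumes "\<sigma> \<in> Av (Suc n) {[1,2,3], [1,3,2], [2,3,1]}" "hd \<sigma> \<noteq> Suc n"
  shows "\<sigma> = rev [1..<Suc n] @ [Suc n]"
proof -
  have av: "\<not> contains \<sigma> [1,2,3]" "\<not> contains \<sigma> [1,3,2]" "\<not> contains \<sigma> [2,3,1]"
    and perm: "is_perm (Suc n) \<sigma>"
    using assms(1) by (auto simp: Av_def avoids_def)
  obtain us where \<sigma>: "\<sigma> = us @ [Suc n]" and p: "is_perm n us"
    using max_last_if_avoids_132_231[OF perm av(2,3) assms(2)] .
  have "distinct us" using p by (simp add: is_perm_def)
  have "sorted_wrt (>) us"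
    unfolding sorted_wrt_greater_iff_no_non_inversion[OF \<open>distinct us\<close>]
  proof (intro allI notI)
    fix i j assume "non_inversion us i j"
    then have "contains \<sigma> [1,2,3]"
      using is_perm_mem_less_Suc[OF p] \<sigma>
      by (intro contains_by_3_positions[of i j "length us"]) (auto simp: non_inversion_def nth_append)
    with av show False by blast
  qed
  moreover have "set us = {1..<Suc n}"
    using p by (simp add: is_perm_def atLeastLessThanSuc_atLeastAtMost)
  ultimately have "us = rev [1..<Suc n]" by (rule sorted_greater_eq_rev_upt)
  then show ?thesis using \<sigma> by simp
qed

lemma Av_123_132_231_max_not_first:
  assumes "1 \<le> n"
  shows "{\<sigma> \<in> Av (Suc n) {[1,2,3], [1,3,2], [2,3,1]}. hd \<sigma> \<noteq> Suc n} =
    {rev [1..<Suc n] @ [Suc n]}"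
proof -
  have "hd (rev [1..<Suc n] @ [Suc n]) \<noteq> Suc n" using assms by simp
  then show ?thesis
    using Av_123_132_231_max_not_first_imp decreasing_snoc_max_mem_Av_123_132_231 by blast
qed

lemma peak_decreasing_mem_Av_123_132_213_3412:
  assumes "1 \<le> n"
  shows "n # Suc n # rev [1..<n] \<in> Av (Suc n) ({[1,2,3], [1,3,2], [2,1,3]} \<union> {[3,4,1,2]})"
proof -
  have "set (n # Suc n # rev [1..<n]) = {1..Suc n}" using assms by auto
  then have "is_perm (Suc n) (n # Suc n # rev [1..<n])"
    unfolding is_perm_def using assms by auto
  moreover have "\<not> contains (n # Suc n # rev [1..<n]) \<pi>"
    if "\<pi> \<in> {[1,2,3], [1,3,2], [2,1,3]} \<union> {[3,4,1,2]}" for \<pi>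
  proof -
    have single: "i = 0 \<and> j = 1" if "non_inversion (n # Suc n # rev [1..<n]) i j" for i j
      using non_inversion_peak_then_decreasing[OF sorted_greater_rev_upt _ _ that] by simp
    note two_non_inversions = not_contains_if_single_non_inversion[OF single]
    from that consider "\<pi> = [1,2,3]" | "\<pi> = [1,3,2]" | "\<pi> = [2,1,3]" | "\<pi> = [3,4,1,2]" by blast
    then show ?thesis
    proof cases
      case 1
      show ?thesis unfolding 1
        by (rule two_non_inversions[where a=0 and b=1 and c=1 and d=2]) (auto simp: non_inversion_def)
    next
      case 2
      show ?thesis unfolding 2
        by (rule two_non_inversions[where a=0 and b=1 and c=0 and d=2]) (auto simp: non_inversion_def)
    next
      case 3
      show ?thesis unfolding 3
        by (rule two_non_inversions[where a=0 and b=2 and c=1 and d=2]) (auto simp: non_inversion_def)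
    next
      case 4
      show ?thesis unfolding 4
        by (rule two_non_inversions[where a=0 and b=1 and c=2 and d=3]) (auto simp: non_inversion_def)
    qed
  qed
  ultimately show ?thesis by (simp add: Av_def avoids_def)
qed

lemma max_second_if_avoids_123_213:
  assumes "is_perm (Suc n) \<sigma>" "\<not> contains \<sigma> [1,2,3]" "\<not> contains \<sigma> [2,1,3]" "hd \<sigma> \<noteq> Suc n"
  obtains a vs where "\<sigma> = a # Suc n # vs" "is_perm n (a # vs)"
proof -
  obtain us vs where \<sigma>: "\<sigma> = us @ Suc n # vs" and p: "is_perm n (us @ vs)"
    by (rule is_perm_Suc_split_max[OF assms(1)])
  have "us \<noteq> []" using assms(4) \<sigma> by auto
  have "length us = 1"
  proof (rule ccontr)
    assume "length us \<noteq> 1"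
    then have two: "1 < length us" using \<open>us \<noteq> []\<close> by (cases us) auto
    have "distinct us" using p by (simp add: is_perm_def)
    then have "us ! 0 \<noteq> us ! 1" using two nth_eq_iff_index_eq by fastforce
    moreover have "us ! 0 < Suc n" "us ! 1 < Suc n"
      using is_perm_mem_less_Suc[OF p] nth_mem two less_trans[OF zero_less_one two] by auto
    moreover have "\<sigma> ! 0 = us ! 0" "\<sigma> ! 1 = us ! 1" "\<sigma> ! length us = Suc n"
      "length us < length \<sigma>"
      using two \<sigma> by (auto simp: nth_append)
    ultimately have "contains \<sigma> [1,2,3] \<or> contains \<sigma> [2,1,3]"
      using two by (cases "us ! 0 < us ! 1") (auto intro!: contains_by_3_positions[of 0 1 "length us"])
    with assms(2,3) show False by blast
  qed
  then obtain a where "us = [a]" by (cases us) auto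
  then show ?thesis using that \<sigma> p by simp
qed

lemma Av_123_132_213_3412_max_not_first_imp:
  assumes "\<sigma> \<in> Av (Suc n) ({[1,2,3], [1,3,2], [2,1,3]} \<union> {[3,4,1,2]})" "hd \<sigma> \<noteq> Suc n"
  shows "\<sigma> = n # Suc n # rev [1..<n]"
proof -
  have av: "\<not> contains \<sigma> [1,2,3]" "\<not> contains \<sigma> [1,3,2]" "\<not> contains \<sigma> [2,1,3]"
      "\<not> contains \<sigma> [3,4,1,2]"
    and perm: "is_perm (Suc n) \<sigma>"
    using assms(1) by (auto simp: Av_def avoids_def)
  obtain a vs where \<sigma>: "\<sigma> = a # Suc n # vs" and p: "is_perm n (a # vs)"
    using max_second_if_avoids_123_213[OF perm av(1,3) assms(2)] .
  have "distinct (a # vs)" "set (a # vs) = {1..n}" using p by (auto simp: is_perm_def)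
  then have "distinct vs" by simp
  have vs_below: "x < a" if x: "x \<in> set vs" for x
  proof (rule ccontr)
    assume "\<not> x < a"
    with x \<open>distinct (a # vs)\<close> have "a < x" by (cases "x = a") auto
    moreover have "x < Suc n" using is_perm_mem_less_Suc[OF p] x by simp
    moreover obtain k where "k < length vs" "vs ! k = x" using x by (auto simp: in_set_conv_nth)
    ultimately have "contains \<sigma> [1,3,2]"
      using \<sigma> by (intro contains_by_3_positions[of 0 1 "Suc (Suc k)"]) auto
    with av show False by blast
  qed
  have "1 \<le> n" using p by (simp add: is_perm_def)
  then have "n \<in> set (a # vs)" using \<open>set (a # vs) = {1..n}\<close> by simp
  moreover have "a \<le> n" using \<open>set (a # vs) = {1..n}\<close> by auto
  ultimately have "a = n" using vs_below by fastforce
  have "sorted_wrt (>) vs"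
    unfolding sorted_wrt_greater_iff_no_non_inversion[OF \<open>distinct vs\<close>]
  proof (intro allI notI)
    fix i j assume ij: "non_inversion vs i j"
    then have "vs ! i < n" "vs ! j < n"
      using vs_below[OF nth_mem] \<open>a = n\<close> by (auto simp: non_inversion_def)
    with ij have "contains \<sigma> [3,4,1,2]"
      using \<sigma> \<open>a = n\<close>
      by (intro contains_by_4_positions[of 0 1 "Suc (Suc i)" "Suc (Suc j)"]) (auto simp: non_inversion_def)
    with av show False by blast
  qed
  moreover have "set vs = {1..<n}"
  proof -
    have "set vs = set (a # vs) - {a}" using \<open>distinct (a # vs)\<close> by auto
    also have "\<dots> = {1..n} - {n}" using \<open>set (a # vs) = {1..n}\<close> \<open>a = n\<close> by simp
    also have "\<dots> = {1..<n}" by auto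
    finally show ?thesis .
  qed
  ultimately have "vs = rev [1..<n]" by (rule sorted_greater_eq_rev_upt)
  then show ?thesis using \<sigma> \<open>a = n\<close> by simp
qed

lemma Av_123_132_213_3412_max_not_first:
  assumes "1 \<le> n"
  shows "{\<sigma> \<in> Av (Suc n) ({[1,2,3], [1,3,2], [2,1,3]} \<union> {[3,4,1,2]}). hd \<sigma> \<noteq> Suc n} =
    {n # Suc n # rev [1..<n]}"
proof -
  have "hd (n # Suc n # rev [1..<n]) \<noteq> Suc n" by simp
  then show ?thesis
    using Av_123_132_213_3412_max_not_first_imp peak_decreasing_mem_Av_123_132_213_3412[OF assms]
    by blast
qed

theorem theorem4p3:
  shows "(\<forall>n \<tau>. n \<ge> 1 \<longrightarrow> is_perm 4 \<tau> \<longrightarrow>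
            (\<exists>\<pi>\<in>{[1,2,3],[1,3,2],[2,3,1]}. contains \<tau> \<pi>) \<longrightarrow>
            card (Av n ({[1,2,3],[1,3,2],[2,3,1]} \<union> {\<tau>})) = n)
       \<and> (\<forall>n. n \<ge> 1 \<longrightarrow>
            card (Av n ({[1,2,3],[1,3,2],[2,1,3]} \<union> {[3,4,1,2]})) = n)"
proof (intro conjI allI impI)
  fix n :: nat and \<tau> :: "nat list"
  assume n: "n \<ge> 1" and "is_perm 4 \<tau>" and contained: "\<exists>\<pi>\<in>{[1,2,3],[1,3,2],[2,3,1]}. contains \<tau> \<pi>"
  have first_not_max: "\<forall>\<pi>\<in>{[1,2,3],[1,3,2],[2,3,1]}. \<exists>l. non_inversion \<pi> 0 l"
    by (auto simp: non_inversion_def intro: exI[of _ 1])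
  have unique: "\<exists>\<delta>. {\<sigma> \<in> Av (Suc m) {[1,2,3],[1,3,2],[2,3,1]}. hd \<sigma> \<noteq> Suc m} = {\<delta>}"
    if "1 \<le> m" for m
    using Av_123_132_231_max_not_first[OF that] by blast
  have "Av n ({[1,2,3],[1,3,2],[2,3,1]} \<union> {\<tau>}) = Av n {[1,2,3],[1,3,2],[2,3,1]}"
    by (rule Av_Un_redundant_pattern[OF contained])
  then show "card (Av n ({[1,2,3],[1,3,2],[2,3,1]} \<union> {\<tau>})) = n"
    using card_Av_eq_if_unique_max_not_first[OF first_not_max unique n] by simp
next
  fix n :: nat assume n: "n \<ge> 1"
  have first_not_max: "\<forall>\<pi>\<in>{[1,2,3],[1,3,2],[2,1,3]} \<union> {[3,4,1,2]}. \<exists>l. non_inversion \<pi> 0 l"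
    by (auto simp: non_inversion_def intro: exI[of _ 1] exI[of _ 2])
  have unique: "\<exists>\<delta>. {\<sigma> \<in> Av (Suc m) ({[1,2,3],[1,3,2],[2,1,3]} \<union> {[3,4,1,2]}). hd \<sigma> \<noteq> Suc m} = {\<delta>}"
    if "1 \<le> m" for m
    using Av_123_132_213_3412_max_not_first[OF that] by blast
  show "card (Av n ({[1,2,3],[1,3,2],[2,1,3]} \<union> {[3,4,1,2]})) = n"
    by (rule card_Av_eq_if_unique_max_not_first[OF first_not_max unique n])
qed

end
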